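(* Let $R=\mathbb{Z}[A^{\pm1}]$. Let $G_0\subseteq G_1\subseteq G_2\subseteq\cdots$ be sets with $G_\infty=\bigcup_{i\ge0}G_i$, and let $\mathcal{G}_n$ and $\mathcal{G}_\infty$ be the free $R$-modules with bases $G_n$ and $G_\infty$ (so $\mathcal{G}_n\subseteq\mathcal{G}_\infty$). Let $J_0\subseteq J_1\subseteq\cdots$ be subsets of $\mathcal{G}_\infty$ with $J_\infty=\bigcup_{i\ge0}J_i$, and let $\mathcal{J}_n,\mathcal{J}_\infty$ be the submodules of $\mathcal{G}_\infty$ generated by $J_n,J_\infty$. Suppose: (1) $\mathcal{J}_0\subseteq\mathcal{G}_0$; (2) there is a map $\eta:J_\infty\to G_\infty$ restricting to bijections $J_n\setminus J_{n-1}\to G_n\setminus G_{n-1}$ for all $n\ge1$; (3) for every $n\ge1$ and $r\in J_n\setminus J_{n-1}$ there exist a sign $\epsilon\in\{\pm1\}$, an integer $k$ and $g\in\mathcal{G}_{n-1}$ with $r=\epsilon A^k\eta(r)+g$. Then $\mathcal{G}_\infty/\mathcal{J}_\infty=\mathcal{G}_0/\mathcal{J}_0$, i.e. the natural map $\mathcal{G}_0/\mathcal{J}_0\to\mathcal{G}_\infty/\mathcal{J}_\infty$ is an isomorphism. *)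

theory Defs
  imports Complex_Main "HOL-Library.Poly_Mapping"
begin

text \<open>The ring R = Z[A, A^-1] of integer Laurent polynomials, realised as the
  group ring of (int,+) over int: a finitely supported map k \<mapsto> coefficient of A^k.\<close>
type_synonym laurent = "int \<Rightarrow>\<^sub>0 int"

definition Apow :: "int \<Rightarrow> laurent" where
  "Apow k = Poly_Mapping.single k 1"

definition lscale :: "laurent \<Rightarrow> ('g \<Rightarrow>\<^sub>0 laurent) \<Rightarrow> ('g \<Rightarrow>\<^sub>0 laurent)" where
  "lscale r f = Poly_Mapping.map (\<lambda>c. r * c) f"

definition basisv :: "'g \<Rightarrow> ('g \<Rightarrow>\<^sub>0 laurent)" where
  "basisv g = Poly_Mapping.single g 1"

definition freemod :: "'g set \<Rightarrow> ('g \<Rightarrow>\<^sub>0 laurent) set" where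
  "freemod S = {f. Poly_Mapping.keys f \<subseteq> S}"

definition rspan :: "('g \<Rightarrow>\<^sub>0 laurent) set \<Rightarrow> ('g \<Rightarrow>\<^sub>0 laurent) set" where
  "rspan J = module.span lscale J"

end

theory Submission
  imports Defs
begin

text \<open>Each new relation r in J(n+1) - J(n) has, up to a unit, the new generator \<eta> r as its
  only term outside G(n), and distinct relations have distinct new generators. Comparing
  coefficients at these generators, an element of the span of J(n+1) lying in the free module
  on G(n) can only involve the old relations J(n); by induction, relations of
  \<open>\<J>\<^sub>\<infinity>\<close> among elements of \<open>\<G>\<^sub>0\<close> already come from \<open>\<J>\<^sub>0\<close>. Conversely, each new relation
  expresses its new generator modulo \<open>\<J>\<^sub>\<infinity>\<close> as a combination of older generators, so by
  induction every generator is congruent to an element of \<open>\<G>\<^sub>0\<close>.\<close>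

lemma lookup_lscale [simp]: "Poly_Mapping.lookup (lscale r f) x = r * Poly_Mapping.lookup f x"
  unfolding lscale_def by transfer (simp add: when_def)

lemma lookup_basisv [simp]: "Poly_Mapping.lookup (basisv a) b = (if b = a then 1 else 0)"
  unfolding basisv_def by (simp add: lookup_single when_def)

lemma keys_lscale: "Poly_Mapping.keys (lscale r f) \<subseteq> Poly_Mapping.keys f"
  by (auto simp: in_keys_iff)

interpretation lmod: module "lscale :: laurent \<Rightarrow> ('g \<Rightarrow>\<^sub>0 laurent) \<Rightarrow> _"
  by unfold_locales (auto intro!: poly_mapping_eqI simp: lookup_add algebra_simps)

lemma subspace_freemod: "lmod.subspace (freemod S)"
  unfolding lmod.subspace_def freemod_def
  by (auto dest!: subsetD[OF keys_add] subsetD[OF keys_lscale])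

lemma freemod_mono: "S \<subseteq> T \<Longrightarrow> freemod S \<subseteq> freemod T"
  unfolding freemod_def by auto

lemma lookup_freemod_outside: "f \<in> freemod S \<Longrightarrow> a \<notin> S \<Longrightarrow> Poly_Mapping.lookup f a = 0"
  unfolding freemod_def by (auto simp: in_keys_iff)

lemma basisv_in_freemod: "a \<in> S \<Longrightarrow> basisv a \<in> freemod S"
  unfolding freemod_def basisv_def by simp

lemma freemod_eq_span_basisv: "freemod S = lmod.span (basisv ` S)"
proof
  show "freemod S \<subseteq> lmod.span (basisv ` S)"
  proof
    fix f assume f: "f \<in> freemod S"
    have "f = (\<Sum>a\<in>Poly_Mapping.keys f. lscale (Poly_Mapping.lookup f a) (basisv a))"
      by (rule poly_mapping_eqI)
        (simp add: lookup_sum in_keys_iff if_distrib[of "(*) _"] cong: if_cong)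
    also have "\<dots> \<in> lmod.span (basisv ` S)"
      using f unfolding freemod_def
      by (intro lmod.span_sum lmod.span_scale lmod.span_base) auto
    finally show "f \<in> lmod.span (basisv ` S)" .
  qed
  show "lmod.span (basisv ` S) \<subseteq> freemod S"
    by (rule lmod.span_minimal[OF _ subspace_freemod]) (auto intro: basisv_in_freemod)
qed

lemma dvd_one_mult_eq_0:
  fixes u :: "'a :: comm_semiring_1"
  assumes "u dvd 1" "c * u = 0"
  shows "c = 0"
proof -
  from assms(1) obtain v where "1 = u * v" by (rule dvdE)
  then have "c = c * u * v" by (simp add: mult.assoc)
  with assms(2) show ?thesis by simp
qed

lemma signed_Apow_dvd_one: "\<epsilon> = 1 \<or> \<epsilon> = -1 \<Longrightarrow> of_int \<epsilon> * Apow k dvd 1"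
proof
  assume "\<epsilon> = 1 \<or> \<epsilon> = -1"
  then have "of_int \<epsilon> * of_int \<epsilon> = (1 :: laurent)"
    by (auto simp flip: of_int_mult)
  then show "1 = of_int \<epsilon> * Apow k * (of_int \<epsilon> * Apow (-k))"
    by (simp add: Apow_def mult_single mult_ac)
qed

lemma (in module) span_Union_mono:
  fixes S :: "nat \<Rightarrow> 'b set"
  assumes "mono S" "x \<in> span (\<Union>n. S n)"
  shows "\<exists>N. x \<in> span (S N)"
  using assms(2)
proof (induction rule: span_induct_alt)
  case base
  then show ?case using span_zero by blast
next
  case (step c x y)
  then obtain i N where i: "x \<in> S i" and N: "y \<in> span (S N)" by blast
  have "x \<in> span (S (max i N))"
    using i monoD[OF assms(1) max.cobounded1] span_base by blast
  moreover have "y \<in> span (S (max i N))"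
    using N span_mono[OF monoD[OF assms(1) max.cobounded2]] by blast
  ultimately show ?case using span_add span_scale by blast
qed

definition unitriangular ::
    "'g set \<Rightarrow> (('g \<Rightarrow>\<^sub>0 laurent) \<Rightarrow> 'g) \<Rightarrow> ('g \<Rightarrow>\<^sub>0 laurent) set \<Rightarrow> bool" where
  "unitriangular H \<eta> T \<longleftrightarrow> inj_on \<eta> T \<and> \<eta> ` T \<inter> H = {} \<and>
     (\<forall>r\<in>T. \<exists>c g. c dvd 1 \<and> g \<in> freemod H \<and> r = lscale c (basisv (\<eta> r)) + g)"

lemma unitriangularI:
  assumes "inj_on \<eta> T" "\<eta> ` T \<inter> H = {}"
    and "\<And>r. r \<in> T \<Longrightarrow> \<exists>\<epsilon>::int. \<exists>k::int. \<exists>g. (\<epsilon> = 1 \<or> \<epsilon> = -1) \<and> g \<in> freemod H \<and>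
           r = lscale (of_int \<epsilon> * Apow k) (basisv (\<eta> r)) + g"
  shows "unitriangular H \<eta> T"
  unfolding unitriangular_def
proof (intro conjI ballI)
  fix r assume "r \<in> T"
  then obtain \<epsilon> k g where "\<epsilon> = 1 \<or> \<epsilon> = -1" "g \<in> freemod H"
      and "r = lscale (of_int \<epsilon> * Apow k) (basisv (\<eta> r)) + g"
    using assms(3) by blast
  then show "\<exists>c g. c dvd 1 \<and> g \<in> freemod H \<and> r = lscale c (basisv (\<eta> r)) + g"
    using signed_Apow_dvd_one by blast
qed (use assms(1,2) in blast)+

lemma unitriangularE:
  assumes "unitriangular H \<eta> T" "r \<in> T"
  obtains c g where "c dvd 1" "g \<in> freemod H" "r = lscale c (basisv (\<eta> r)) + g"
  using assms unfolding unitriangular_def by blast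

lemma lookup_leading_term:
  assumes "g \<in> freemod H" "b \<notin> H"
  shows "Poly_Mapping.lookup (lscale c (basisv a) + g) b = (if b = a then c else 0)"
  using assms by (simp add: lookup_add lookup_freemod_outside)

lemma lookup_unitriangular_new_generator:
  assumes "unitriangular H \<eta> T" "r \<in> T"
  shows "Poly_Mapping.lookup r (\<eta> r) dvd 1"
proof -
  obtain c g where "c dvd 1" "g \<in> freemod H" and r: "r = lscale c (basisv (\<eta> r)) + g"
    using assms by (rule unitriangularE)
  moreover have "\<eta> r \<notin> H" using assms unfolding unitriangular_def by blast
  ultimately show ?thesis
    using lookup_leading_term[of g H "\<eta> r" c "\<eta> r"] unfolding r[symmetric] by simp
qed

lemma lookup_unitriangular_eq_0:
  assumes "unitriangular H \<eta> T" "r \<in> T" "b \<notin> H" "b \<noteq> \<eta> r"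
  shows "Poly_Mapping.lookup r b = 0"
proof -
  obtain c g where "g \<in> freemod H" and r: "r = lscale c (basisv (\<eta> r)) + g"
    using assms(1,2) by (rule unitriangularE)
  with assms(3,4) show ?thesis
    using lookup_leading_term[of g H b c "\<eta> r"] unfolding r[symmetric] by simp
qed

lemma unitriangular_in_freemod:
  assumes "unitriangular H \<eta> T" "r \<in> T"
  shows "r \<in> freemod (insert (\<eta> r) H)"
  unfolding freemod_def mem_Collect_eq
proof
  fix b assume "b \<in> Poly_Mapping.keys r"
  then show "b \<in> insert (\<eta> r) H"
    using lookup_unitriangular_eq_0[OF assms, of b] by (auto simp: in_keys_iff)
qed

lemma unitriangular_basisv_congruent:
  assumes "unitriangular H \<eta> T" "r \<in> T"
  obtains u where "basisv (\<eta> r) - lscale u r \<in> freemod H"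
proof -
  obtain c g where c: "c dvd 1" and g: "g \<in> freemod H"
    and r: "r = lscale c (basisv (\<eta> r)) + g"
    using assms by (rule unitriangularE)
  from c obtain u where u: "1 = c * u" by (rule dvdE)
  from r have "lscale u r = lscale u (lscale c (basisv (\<eta> r)) + g)"
    by (rule arg_cong[where f = "lscale u"])
  also have "\<dots> = lscale u (lscale c (basisv (\<eta> r))) + lscale u g"
    by (simp only: lmod.scale_right_distrib)
  also have "lscale u (lscale c (basisv (\<eta> r))) = basisv (\<eta> r)"
    by (simp add: u[symmetric] mult.commute)
  finally have "basisv (\<eta> r) - lscale u r = - lscale u g"
    by simp
  also have "\<dots> \<in> freemod H"
    using g by (intro lmod.subspace_neg lmod.subspace_scale subspace_freemod)
  finally show thesis by (rule that)
qed

text \<open>Read off the coefficient at the new generator \<eta> r: only r contributes there.\<close>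
lemma unitriangular_lincomb_coeff_eq_0:
  assumes T: "unitriangular H \<eta> T" and t: "finite t" "t \<subseteq> T"
    and comb: "(\<Sum>s\<in>t. lscale (c s) s) \<in> freemod H" and r: "r \<in> t"
  shows "c r = 0"
proof -
  have rT: "r \<in> T" using r t(2) by blast
  have inj: "inj_on \<eta> T" and new: "\<eta> r \<notin> H"
    using T rT unfolding unitriangular_def by blast+
  define u where "u = Poly_Mapping.lookup r (\<eta> r)"
  have others: "Poly_Mapping.lookup s (\<eta> r) = 0" if s: "s \<in> t - {r}" for s
  proof -
    have sT: "s \<in> T" using s t(2) by blast
    with s rT inj have "\<eta> r \<noteq> \<eta> s" by (auto dest: inj_onD)
    then show ?thesis
      using lookup_unitriangular_eq_0[OF T sT new] by simp
  qed
  have "0 = Poly_Mapping.lookup (\<Sum>s\<in>t. lscale (c s) s) (\<eta> r)"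
    using lookup_freemod_outside[OF comb new] by simp
  also have "\<dots> = (\<Sum>s\<in>t. c s * Poly_Mapping.lookup s (\<eta> r))"
    by (simp add: lookup_sum)
  also have "\<dots> = c r * u"
    using others by (simp add: sum.remove[OF t(1) r] u_def)
  finally have "c r * u = 0" ..
  with lookup_unitriangular_new_generator[OF T rT] show ?thesis
    unfolding u_def by (rule dvd_one_mult_eq_0)
qed

lemma rspan_unitriangular_Int_freemod:
  assumes T: "unitriangular H \<eta> (R' - R)" and R: "rspan R \<subseteq> freemod H"
  shows "rspan R' \<inter> freemod H \<subseteq> rspan R"
proof
  fix x assume "x \<in> rspan R' \<inter> freemod H"
  then obtain t c where t: "finite t" "t \<subseteq> R'" and x: "x = (\<Sum>s\<in>t. lscale (c s) s)"
    and xH: "x \<in> freemod H"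
    unfolding rspan_def lmod.span_explicit by blast
  define y where "y = (\<Sum>s\<in>t \<inter> R. lscale (c s) s)"
  define z where "z = (\<Sum>s\<in>t - R. lscale (c s) s)"
  have "x = y + z"
    unfolding x y_def z_def by (rule sum.Int_Diff[OF t(1)])
  have y: "y \<in> rspan R"
    unfolding y_def rspan_def by (intro lmod.span_sum lmod.span_scale lmod.span_base) auto
  have "z = x - y" using \<open>x = y + z\<close> by simp
  also have "\<dots> \<in> freemod H"
    using y R by (intro lmod.subspace_diff[OF subspace_freemod xH]) blast
  finally have "z \<in> freemod H" .
  then have "\<forall>s\<in>t - R. c s = 0"
    using unitriangular_lincomb_coeff_eq_0[OF T, of "t - R" c] t unfolding z_def by blast
  then have "z = 0" unfolding z_def by simp
  then show "x \<in> rspan R" using \<open>x = y + z\<close> y by simp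
qed

locale unitriangular_filtration =
  fixes G :: "nat \<Rightarrow> 'g set"
    and J :: "nat \<Rightarrow> ('g \<Rightarrow>\<^sub>0 laurent) set"
    and \<eta> :: "('g \<Rightarrow>\<^sub>0 laurent) \<Rightarrow> 'g"
  assumes G_mono: "mono G"
    and J_mono: "mono J"
    and rspan_J0: "rspan (J 0) \<subseteq> freemod (G 0)"
    and J_step: "\<And>n. unitriangular (G n) \<eta> (J (Suc n) - J n)"
    and new_generators: "\<And>n. \<eta> ` (J (Suc n) - J n) = G (Suc n) - G n"
begin

lemma rspan_J_subset_freemod: "rspan (J n) \<subseteq> freemod (G n)"
proof (induction n)
  case 0
  show ?case by (rule rspan_J0)
next
  case (Suc n)
  have G_Suc: "G n \<subseteq> G (Suc n)"
    using G_mono by (simp add: mono_iff_le_Suc)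
  have "r \<in> freemod (G (Suc n))" if r: "r \<in> J (Suc n)" for r
  proof (cases "r \<in> J n")
    case True
    then have "r \<in> freemod (G n)"
      using Suc lmod.span_base unfolding rspan_def by blast
    then show ?thesis using freemod_mono[OF G_Suc] by blast
  next
    case False
    with r have new: "r \<in> J (Suc n) - J n" by blast
    then have "\<eta> r \<in> G (Suc n)" using new_generators[of n] by blast
    with G_Suc have "freemod (insert (\<eta> r) (G n)) \<subseteq> freemod (G (Suc n))"
      by (intro freemod_mono) blast
    then show ?thesis using unitriangular_in_freemod[OF J_step new] by blast
  qed
  then show ?case
    unfolding rspan_def by (intro lmod.span_minimal subspace_freemod) blast
qed

lemma rspan_J_Suc_Int_freemod: "rspan (J (Suc n)) \<inter> freemod (G n) \<subseteq> rspan (J n)"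
  using J_step rspan_J_subset_freemod by (rule rspan_unitriangular_Int_freemod)

lemma rspan_Union_Int_freemod: "rspan (\<Union>n. J n) \<inter> freemod (G 0) \<subseteq> rspan (J 0)"
proof
  fix x assume x: "x \<in> rspan (\<Union>n. J n) \<inter> freemod (G 0)"
  then obtain N where "x \<in> rspan (J N)"
    using lmod.span_Union_mono[OF J_mono] unfolding rspan_def by blast
  then show "x \<in> rspan (J 0)"
  proof (induction N)
    case (Suc N)
    have "x \<in> freemod (G N)"
      using x freemod_mono[OF monoD[OF G_mono le0]] by blast
    with Suc show ?case using rspan_J_Suc_Int_freemod by blast
  qed
qed

lemma freemod_G_subset_span: "freemod (G n) \<subseteq> lmod.span (freemod (G 0) \<union> (\<Union>i. J i))"
  (is "_ \<subseteq> ?M")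
proof (induction n)
  case 0
  show ?case using lmod.span_superset by (rule subset_trans[OF Un_upper1])
next
  case (Suc n)
  have "basisv a \<in> ?M" if a: "a \<in> G (Suc n)" for a
  proof (cases "a \<in> G n")
    case True
    then show ?thesis using Suc basisv_in_freemod[OF True] by blast
  next
    case False
    with a new_generators[of n] obtain r where r: "r \<in> J (Suc n) - J n" and a_r: "a = \<eta> r"
      by blast
    obtain u where "basisv a - lscale u r \<in> freemod (G n)"
      using unitriangular_basisv_congruent[OF J_step r] unfolding a_r .
    with Suc have "basisv a - lscale u r \<in> ?M" by blast
    moreover have "lscale u r \<in> ?M"
      using r by (intro lmod.span_scale lmod.span_base) blast
    ultimately have "(basisv a - lscale u r) + lscale u r \<in> ?M"
      by (rule lmod.span_add)
    then show ?thesis by simp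
  qed
  then have "lmod.span (basisv ` G (Suc n)) \<subseteq> ?M"
    by (intro lmod.span_minimal lmod.subspace_span) blast
  then show ?case by (simp only: freemod_eq_span_basisv)
qed

lemma freemod_Union_subset_span: "freemod (\<Union>n. G n) \<subseteq> lmod.span (freemod (G 0) \<union> (\<Union>i. J i))"
  (is "_ \<subseteq> ?M")
proof -
  have "basisv a \<in> ?M" if "a \<in> G n" for a n
    using freemod_G_subset_span basisv_in_freemod[OF that] by blast
  then have "lmod.span (basisv ` (\<Union>n. G n)) \<subseteq> ?M"
    by (intro lmod.span_minimal lmod.subspace_span) blast
  then show ?thesis by (simp only: freemod_eq_span_basisv)
qed

lemma freemod_Union_congruent:
  assumes "y \<in> freemod (\<Union>n. G n)"
  shows "\<exists>x \<in> freemod (G 0). y - x \<in> rspan (\<Union>n. J n)"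
proof -
  have "lmod.span (freemod (G 0) \<union> (\<Union>n. J n))
      = {x + z | x z. x \<in> freemod (G 0) \<and> z \<in> rspan (\<Union>n. J n)}"
    by (simp add: lmod.span_Un rspan_def lmod.span_eq_iff[THEN iffD2, OF subspace_freemod])
  then obtain x z where "x \<in> freemod (G 0)" "z \<in> rspan (\<Union>n. J n)" "y = x + z"
    using assms freemod_Union_subset_span by blast
  then show ?thesis by (intro bexI[of _ x]) simp_all
qed

end

theorem lemma4p4:
  fixes G :: "nat \<Rightarrow> 'g set"
    and J :: "nat \<Rightarrow> ('g \<Rightarrow>\<^sub>0 laurent) set"
    and \<eta> :: "('g \<Rightarrow>\<^sub>0 laurent) \<Rightarrow> 'g"
  assumes G_mono: "\<And>n. G n \<subseteq> G (Suc n)"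
    and J_mono: "\<And>n. J n \<subseteq> J (Suc n)"
    and J_sub: "\<And>n. J n \<subseteq> freemod (\<Union>i. G i)"
    and h1: "rspan (J 0) \<subseteq> freemod (G 0)"
    and h2_maps: "\<And>r. r \<in> (\<Union>i. J i) \<Longrightarrow> \<eta> r \<in> (\<Union>i. G i)"
    and h2_bij: "\<And>n. n \<ge> 1 \<Longrightarrow> bij_betw \<eta> (J n - J (n - 1)) (G n - G (n - 1))"
    and h3: "\<And>n r. n \<ge> 1 \<Longrightarrow> r \<in> J n - J (n - 1) \<Longrightarrow>
              \<exists>\<epsilon>::int. \<exists>k::int. \<exists>g. (\<epsilon> = 1 \<or> \<epsilon> = -1) \<and> g \<in> freemod (G (n - 1)) \<and>
                 r = lscale (of_int \<epsilon> * Apow k) (basisv (\<eta> r)) + g"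
  shows "(\<forall>x \<in> freemod (G 0). x \<in> rspan (\<Union>i. J i) \<longrightarrow> x \<in> rspan (J 0))
       \<and> (\<forall>y \<in> freemod (\<Union>i. G i). \<exists>x \<in> freemod (G 0). y - x \<in> rspan (\<Union>i. J i))"
proof -
  interpret unitriangular_filtration G J \<eta>
  proof
    show "mono G" "mono J"
      using G_mono J_mono by (simp_all add: mono_iff_le_Suc)
    show "rspan (J 0) \<subseteq> freemod (G 0)" by (fact h1)
    fix n
    have bij: "bij_betw \<eta> (J (Suc n) - J n) (G (Suc n) - G n)"
      using h2_bij[of "Suc n"] by simp
    then show "\<eta> ` (J (Suc n) - J n) = G (Suc n) - G n"
      by (simp add: bij_betw_def)
    show "unitriangular (G n) \<eta> (J (Suc n) - J n)"
    proof (rule unitriangularI)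
      show "inj_on \<eta> (J (Suc n) - J n)" "\<eta> ` (J (Suc n) - J n) \<inter> G n = {}"
        using bij by (auto simp: bij_betw_def)
    qed (use h3[of "Suc n"] in simp)
  qed
  show ?thesis
    using rspan_Union_Int_freemod freemod_Union_congruent by blast
qed

end
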